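(* Consider a finite set of jobs $1,\dots,n$ to be processed on a single machine with preemption, where job $i$ has release time $r_i\ge 0$ and size (processing requirement) $p_i>0$. Let $S=[s_1,\dots,s_n]$ be an ordering of the jobs, and let $\omega$ be any schedule with completion sequence $S$. Then the schedule $\mathrm{Pri}_S$ dominates $\omega$, i.e. $C_{i,\mathrm{Pri}_S}\le C_{i,\omega}$ for every job $i$.
   Context: A schedule is a (measurable) function $\omega(i,t)\ge 0$ giving the fraction of the machine's unit-rate resource allocated to job $i$ at time $t$, with $\sum_i \omega(i,t)\le 1$ for all $t$, and $\omega(i,t)=0$ whenever job $i$ is not pending at time $t$. Job $i$ is pending at time $t$ if it has been released ($t\ge r_i$) and not yet completed. The completion time $C_{i,\omega}$ of job $i$ under $\omega$ is the earliest time $C$ such that $\int_{r_i}^{C}\omega(i,t)\,dt = p_i$. A schedule $\omega$ dominates a schedule $\omega'$ if $C_{i,\omega}\le C_{i,\omega'}$ for every job $i$. A completion sequence is an ordering $S=[s_1,\dots,s_n]$ of the jobs; a schedule $\omega$ has completion sequence $S$ if $C_{s_i,\omega}\le C_{s_j,\omega}$ for all $i<j$. For a completion sequence $S$, the schedule $\mathrm{Pri}_S$ is defined by $\mathrm{Pri}_S(i,t)=1$ if $i$ is the first job in $S$ that is pending at time $t$, and $\mathrm{Pri}_S(i,t)=0$ otherwise. *)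

theory Defs
  imports "HOL-Analysis.Analysis"
begin

text \<open>Jobs are 0..<n.  A schedule is a function w :: nat => real => real,
  w i t = fraction of the machine given to job i at time t.\<close>

definition work_done :: "(nat \<Rightarrow> real \<Rightarrow> real) \<Rightarrow> (nat \<Rightarrow> real) \<Rightarrow> nat \<Rightarrow> real \<Rightarrow> real" where
  "work_done w r i C = (LBINT t:{r i..C}. w i t)"

definition completion :: "(nat \<Rightarrow> real \<Rightarrow> real) \<Rightarrow> (nat \<Rightarrow> real) \<Rightarrow> (nat \<Rightarrow> real) \<Rightarrow> nat \<Rightarrow> real" where
  "completion w r p i = Inf {C. r i \<le> C \<and> work_done w r i C = p i}"

definition pending :: "(nat \<Rightarrow> real \<Rightarrow> real) \<Rightarrow> (nat \<Rightarrow> real) \<Rightarrow> (nat \<Rightarrow> real) \<Rightarrow> nat \<Rightarrow> real \<Rightarrow> bool" where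
  "pending w r p i t \<longleftrightarrow> r i \<le> t \<and> t < completion w r p i"

definition is_schedule :: "nat \<Rightarrow> (nat \<Rightarrow> real) \<Rightarrow> (nat \<Rightarrow> real) \<Rightarrow> (nat \<Rightarrow> real \<Rightarrow> real) \<Rightarrow> bool" where
  "is_schedule n r p w \<longleftrightarrow>
     (\<forall>i<n. w i \<in> borel_measurable borel) \<and>
     (\<forall>i<n. \<forall>t. 0 \<le> w i t) \<and>
     (\<forall>t. (\<Sum>i<n. w i t) \<le> 1) \<and>
     (\<forall>i<n. \<forall>t. \<not> pending w r p i t \<longrightarrow> w i t = 0) \<and>
     (\<forall>i<n. \<exists>C. r i \<le> C \<and> work_done w r i C = p i)"

definition dominates :: "nat \<Rightarrow> (nat \<Rightarrow> real) \<Rightarrow> (nat \<Rightarrow> real) \<Rightarrow> (nat \<Rightarrow> real \<Rightarrow> real) \<Rightarrow> (nat \<Rightarrow> real \<Rightarrow> real) \<Rightarrow> bool" where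
  "dominates n r p w w' \<longleftrightarrow> (\<forall>i<n. completion w r p i \<le> completion w' r p i)"

definition is_ordering :: "nat \<Rightarrow> nat list \<Rightarrow> bool" where
  "is_ordering n S \<longleftrightarrow> distinct S \<and> set S = {..<n}"

definition has_completion_sequence :: "(nat \<Rightarrow> real) \<Rightarrow> (nat \<Rightarrow> real) \<Rightarrow> (nat \<Rightarrow> real \<Rightarrow> real) \<Rightarrow> nat list \<Rightarrow> bool" where
  "has_completion_sequence r p w S \<longleftrightarrow>
     (\<forall>a b. a < b \<and> b < length S \<longrightarrow> completion w r p (S ! a) \<le> completion w r p (S ! b))"

text \<open>Pri_S is defined self-referentially (pending refers to completion under Pri_S itself):
  job i gets rate 1 at t iff i is pending and no job earlier in S is pending.\<close>
definition is_Pri :: "nat \<Rightarrow> (nat \<Rightarrow> real) \<Rightarrow> (nat \<Rightarrow> real) \<Rightarrow> nat list \<Rightarrow> (nat \<Rightarrow> real \<Rightarrow> real) \<Rightarrow> bool" where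
  "is_Pri n r p S w \<longleftrightarrow> is_schedule n r p w \<and>
     (\<forall>i<n. \<forall>t. w i t =
        (if pending w r p i t \<and>
            (\<forall>a b. a < b \<and> b < length S \<and> S ! b = i \<longrightarrow> \<not> pending w r p (S ! a) t)
         then 1 else 0))"

end

theory Submission imports Defs begin

text \<open>Let \<open>T\<close> be the completion time of job \<open>i\<close> under \<open>\<omega>\<close> and \<open>A\<close> the set of jobs up to
  \<open>i\<close> in \<open>S\<close>; all of them are done by \<open>T\<close> under \<open>\<omega>\<close>. Whenever a job of \<open>A\<close> is pending,
  \<open>Pri\<^sub>S\<close> runs a job of \<open>A\<close> at full rate. If some job of \<open>A\<close> were still unfinished under
  \<open>Pri\<^sub>S\<close> at \<open>T\<close>, take the maximal interval \<open>(u, T]\<close> on which jobs of \<open>A\<close> are pending under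
  \<open>Pri\<^sub>S\<close>. The jobs of \<open>A\<close> released before \<open>u\<close> are finished by \<open>u\<close>, so on \<open>(u, T]\<close> the
  priority schedule does \<open>T - u\<close> units of work on the jobs \<open>B\<close> of \<open>A\<close> released in \<open>[u, T]\<close>
  without finishing them, whereas \<open>\<omega>\<close> finishes all of \<open>B\<close> within \<open>[u, T]\<close>, so their total
  size is at most \<open>T - u\<close>.\<close>

definition work :: "(nat \<Rightarrow> real \<Rightarrow> real) \<Rightarrow> nat \<Rightarrow> real \<Rightarrow> real \<Rightarrow> real" where
  "work w i a b = integral\<^sup>L lborel (\<lambda>t. indicator {a..b} t * w i t)"

lemma work_done_eq_work: "work_done w r i C = work w i (r i) C"
  by (simp add: work_done_def work_def set_lebesgue_integral_def)

lemma schedule_nonneg: "is_schedule n r p w \<Longrightarrow> i < n \<Longrightarrow> 0 \<le> w i t"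
  by (simp add: is_schedule_def)

lemma schedule_le_1:
  assumes "is_schedule n r p w" "i < n"
  shows "w i t \<le> 1"
proof -
  have "w i t \<le> (\<Sum>j<n. w j t)"
    by (rule member_le_sum) (use assms in \<open>auto simp: is_schedule_def\<close>)
  also have "\<dots> \<le> 1"
    using assms by (simp add: is_schedule_def)
  finally show ?thesis .
qed

lemma schedule_zero_unless_pending:
  "is_schedule n r p w \<Longrightarrow> i < n \<Longrightarrow> w i t = 0 \<or> r i \<le> t \<and> t < completion w r p i"
  unfolding is_schedule_def pending_def by blast

lemma schedule_finishes:
  "is_schedule n r p w \<Longrightarrow> i < n \<Longrightarrow> \<exists>C. r i \<le> C \<and> work w i (r i) C = p i"
  by (simp add: is_schedule_def work_done_eq_work)

lemma completion_le: "r i \<le> C \<Longrightarrow> work w i (r i) C = p i \<Longrightarrow> completion w r p i \<le> C"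
  unfolding completion_def work_done_eq_work
  by (rule cInf_lower) (auto intro: bdd_belowI[where m = "r i"])

lemma release_le_completion:
  assumes "is_schedule n r p w" "i < n"
  shows "r i \<le> completion w r p i"
proof -
  obtain C where "r i \<le> C" "work w i (r i) C = p i"
    using schedule_finishes[OF assms] by blast
  then show ?thesis
    unfolding completion_def work_done_eq_work by (intro cInf_greatest) auto
qed

lemma integrable_schedule_on_interval:
  assumes "is_schedule n r p w" "i < n"
  shows "integrable lborel (\<lambda>t. indicator {a..b} t * w i t)"
proof (rule Bochner_Integration.integrable_bound)
  show "integrable lborel (indicator {a..b} :: real \<Rightarrow> real)"
    by (rule integrable_real_indicator) (auto simp: emeasure_lborel_Icc_eq)
  have "w i \<in> borel_measurable borel"
    using assms by (simp add: is_schedule_def)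
  then show "(\<lambda>t. indicator {a..b} t * w i t) \<in> borel_measurable lborel"
    by measurable
  show "AE t in lborel. norm (indicator {a..b} t * w i t) \<le> norm (indicator {a..b} t :: real)"
    using schedule_nonneg[OF assms] schedule_le_1[OF assms] by (auto simp: indicator_def)
qed

lemma work_cong_on_pending:
  assumes "is_schedule n r p w" "i < n"
    and "\<And>t. r i \<le> t \<Longrightarrow> t < completion w r p i \<Longrightarrow> t \<in> {a..b} \<longleftrightarrow> t \<in> {a'..b'}"
  shows "work w i a b = work w i a' b'"
  unfolding work_def
  by (rule arg_cong[where f = "integral\<^sup>L lborel"], rule ext)
     (use schedule_zero_unless_pending[OF assms(1,2)] assms(3) in \<open>auto simp: indicator_def\<close>)

lemma work_le_size:
  assumes "is_schedule n r p w" "i < n"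
  shows "work w i a b \<le> p i"
proof -
  obtain C where C: "r i \<le> C" "work w i (r i) C = p i"
    using schedule_finishes[OF assms] by blast
  have "completion w r p i \<le> C"
    using completion_le C by blast
  then have "work w i a b \<le> work w i (r i) C"
    unfolding work_def
  proof (intro integral_mono integrable_schedule_on_interval[OF assms])
    fix t :: real
    show "indicator {a..b} t * w i t \<le> indicator {r i..C} t * w i t"
      using schedule_zero_unless_pending[OF assms, of t] schedule_nonneg[OF assms, of t]
        \<open>completion w r p i \<le> C\<close>
      by (cases "t \<in> {a..b}") (auto simp: indicator_def)
  qed
  then show ?thesis
    using C by simp
qed

lemma work_eq_size:
  assumes "is_schedule n r p w" "i < n" "a \<le> r i" "completion w r p i \<le> b"
  shows "work w i a b = p i"
proof -
  obtain C where C: "r i \<le> C" "work w i (r i) C = p i"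
    using schedule_finishes[OF assms(1,2)] by blast
  have "completion w r p i \<le> C"
    using completion_le C by blast
  then have "work w i a b = work w i (r i) C"
    using assms(3,4) by (intro work_cong_on_pending[OF assms(1,2)]) auto
  then show ?thesis
    using C by simp
qed

lemma work_less_size:
  assumes "is_schedule n r p w" "i < n" "a \<le> r i" "r i \<le> b" "b < completion w r p i"
  shows "work w i a b < p i"
proof -
  have "work w i a b = work w i (r i) b"
    using assms(3) by (intro work_cong_on_pending[OF assms(1,2)]) auto
  moreover have "work w i (r i) b \<noteq> p i"
    using completion_le[of r i b w p] assms(4,5) by auto
  ultimately show ?thesis
    using work_le_size[OF assms(1,2), of a b] by simp
qed

lemma work_eq_zero:
  assumes "is_schedule n r p w" "i < n" "completion w r p i \<le> a"
  shows "work w i a b = 0"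
proof -
  have "(\<lambda>t. indicator {a..b} t * w i t) = (\<lambda>t. 0)"
    using schedule_zero_unless_pending[OF assms(1,2)] assms(3) by (force simp: indicator_def)
  then show ?thesis
    by (simp add: work_def)
qed

lemma sum_work_eq_integral:
  assumes "is_schedule n r p w" "A \<subseteq> {..<n}"
  shows "(\<Sum>j\<in>A. work w j a b) = integral\<^sup>L lborel (\<lambda>t. \<Sum>j\<in>A. indicator {a..b} t * w j t)"
  unfolding work_def
  by (subst Bochner_Integration.integral_sum)
     (use integrable_schedule_on_interval[OF assms(1)] assms(2) in auto)

lemma integrable_sum_schedule_on_interval:
  assumes "is_schedule n r p w" "A \<subseteq> {..<n}"
  shows "integrable lborel (\<lambda>t. \<Sum>j\<in>A. indicator {a..b} t * w j t)"
  by (rule Bochner_Integration.integrable_sum)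
     (use integrable_schedule_on_interval[OF assms(1)] assms(2) in blast)

lemma sum_work_le_length:
  assumes "is_schedule n r p w" "A \<subseteq> {..<n}" "a \<le> b"
  shows "(\<Sum>j\<in>A. work w j a b) \<le> b - a"
proof -
  have "(\<Sum>j\<in>A. work w j a b) \<le> integral\<^sup>L lborel (indicator {a..b} :: real \<Rightarrow> real)"
    unfolding sum_work_eq_integral[OF assms(1,2)]
  proof (rule integral_mono[OF integrable_sum_schedule_on_interval[OF assms(1,2)]])
    show "integrable lborel (indicator {a..b} :: real \<Rightarrow> real)"
      by (rule integrable_real_indicator) (auto simp: emeasure_lborel_Icc_eq)
    fix t :: real
    have "(\<Sum>j\<in>A. w j t) \<le> (\<Sum>j<n. w j t)"
      by (rule sum_mono2) (use assms in \<open>auto simp: is_schedule_def\<close>)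
    also have "\<dots> \<le> 1"
      using assms by (simp add: is_schedule_def)
    finally show "(\<Sum>j\<in>A. indicator {a..b} t * w j t) \<le> indicator {a..b} t"
      by (auto simp: indicator_def)
  qed
  then show ?thesis
    using assms(3) by simp
qed

lemma sum_work_ge_length:
  assumes "is_schedule n r p w" "A \<subseteq> {..<n}" "a \<le> b"
    and busy: "\<And>t. a < t \<Longrightarrow> t \<le> b \<Longrightarrow> 1 \<le> (\<Sum>j\<in>A. w j t)"
  shows "b - a \<le> (\<Sum>j\<in>A. work w j a b)"
proof -
  have "b - a = integral\<^sup>L lborel (indicator {a<..b} :: real \<Rightarrow> real)"
    using assms(3) by simp
  also have "\<dots> \<le> integral\<^sup>L lborel (\<lambda>t. \<Sum>j\<in>A. indicator {a..b} t * w j t)"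
  proof (rule integral_mono[OF _ integrable_sum_schedule_on_interval[OF assms(1,2)]])
    show "integrable lborel (indicator {a<..b} :: real \<Rightarrow> real)"
      by (rule integrable_real_indicator) (use assms(3) in auto)
    fix t :: real
    have "0 \<le> (\<Sum>j\<in>A. indicator {a..b} t * w j t)"
      by (rule sum_nonneg) (use assms(2) schedule_nonneg[OF assms(1)] in auto)
    then show "indicator {a<..b} t \<le> (\<Sum>j\<in>A. indicator {a..b} t * w j t)"
      using busy[of t] by (auto simp: indicator_def)
  qed
  finally show ?thesis
    by (simp add: sum_work_eq_integral[OF assms(1,2)])
qed

lemma obtain_left_end_of_run:
  fixes T L :: real
  assumes "P T" and bounded: "\<And>t. P t \<Longrightarrow> L \<le> t"
  obtains u where "u \<le> T" "\<And>t. u < t \<Longrightarrow> t \<le> T \<Longrightarrow> P t"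
    "\<And>s. s \<le> T \<Longrightarrow> (\<And>t. s \<le> t \<Longrightarrow> t \<le> T \<Longrightarrow> P t) \<Longrightarrow> u \<le> s"
proof
  define U where "U = {s. s \<le> T \<and> (\<forall>t. s \<le> t \<and> t \<le> T \<longrightarrow> P t)}"
  have "T \<in> U"
    using \<open>P T\<close> by (auto simp: U_def)
  have "bdd_below U"
    by (rule bdd_belowI[where m = L]) (auto simp: U_def intro: bounded)
  show "Inf U \<le> T"
    using \<open>T \<in> U\<close> \<open>bdd_below U\<close> by (rule cInf_lower)
  show "P t" if "Inf U < t" "t \<le> T" for t
  proof -
    obtain s where "s \<in> U" "s < t"
      using cInf_less_iff[of U t] \<open>T \<in> U\<close> \<open>bdd_below U\<close> \<open>Inf U < t\<close> by auto
    then show ?thesis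
      using \<open>t \<le> T\<close> by (auto simp: U_def)
  qed
  show "Inf U \<le> s" if "s \<le> T" "\<And>t. s \<le> t \<Longrightarrow> t \<le> T \<Longrightarrow> P t" for s
    using that \<open>bdd_below U\<close> by (intro cInf_lower) (auto simp: U_def)
qed

lemma work_conserving_completes_no_later:
  assumes w: "is_schedule n r p w" and v: "is_schedule n r p v" and "A \<subseteq> {..<n}"
    and done_w: "\<And>l. l \<in> A \<Longrightarrow> completion w r p l \<le> T"
    and conserving: "\<And>t. (\<exists>l\<in>A. pending v r p l t) \<Longrightarrow> 1 \<le> (\<Sum>l\<in>A. v l t)"
    and "j \<in> A"
  shows "completion v r p j \<le> T"
proof (rule ccontr)
  assume "\<not> ?thesis"
  then have late: "T < completion v r p j" by simp
  have A: "\<And>l. l \<in> A \<Longrightarrow> l < n"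
    using \<open>A \<subseteq> {..<n}\<close> by auto
  have "finite A"
    using \<open>A \<subseteq> {..<n}\<close> finite_subset by blast
  have released: "\<And>l. l \<in> A \<Longrightarrow> r l \<le> T"
    using release_le_completion[OF w A] done_w by (meson order_trans)
  define P where "P t \<longleftrightarrow> (\<exists>l\<in>A. pending v r p l t)" for t
  have "P T"
    using \<open>j \<in> A\<close> released[OF \<open>j \<in> A\<close>] late by (auto simp: P_def pending_def)
  moreover have "P t \<Longrightarrow> (MIN l\<in>A. r l) \<le> t" for t
    using \<open>finite A\<close>
    by (auto simp: P_def pending_def intro: Min.coboundedI[THEN order_trans])
  ultimately obtain u where "u \<le> T" and busy: "\<And>t. u < t \<Longrightarrow> t \<le> T \<Longrightarrow> P t"
    and minimal: "\<And>s. s \<le> T \<Longrightarrow> (\<And>t. s \<le> t \<Longrightarrow> t \<le> T \<Longrightarrow> P t) \<Longrightarrow> u \<le> s"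
    by (rule obtain_left_end_of_run) blast+
  have done_early: "completion v r p l \<le> u" if "l \<in> A" "r l < u" for l
  proof (rule ccontr)
    assume "\<not> ?thesis"
    then have "P t" if "r l \<le> t" "t \<le> T" for t
      using busy[of t] \<open>l \<in> A\<close> that by (cases "t \<le> u") (auto simp: P_def pending_def)
    then have "u \<le> r l"
      using minimal released[OF \<open>l \<in> A\<close>] by blast
    then show False
      using \<open>r l < u\<close> by simp
  qed
  define B where "B = {l\<in>A. u \<le> r l}"
  have "B \<subseteq> A" "B \<subseteq> {..<n}" "finite B"
    using \<open>A \<subseteq> {..<n}\<close> \<open>finite A\<close> by (auto simp: B_def)
  have "u \<le> r j"
  proof (rule ccontr)
    assume "\<not> u \<le> r j"
    then have "completion v r p j \<le> u"
      using done_early \<open>j \<in> A\<close> by simp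
    then show False
      using late \<open>u \<le> T\<close> by simp
  qed
  have "T - u \<le> (\<Sum>l\<in>A. work v l u T)"
  proof (rule sum_work_ge_length[OF v \<open>A \<subseteq> {..<n}\<close> \<open>u \<le> T\<close>])
    fix t assume "u < t" "t \<le> T"
    then show "1 \<le> (\<Sum>l\<in>A. v l t)"
      using busy conserving by (simp add: P_def)
  qed
  also have "\<dots> = (\<Sum>l\<in>B. work v l u T)"
  proof (intro sum.mono_neutral_right[OF \<open>finite A\<close> \<open>B \<subseteq> A\<close>] ballI)
    fix l assume "l \<in> A - B"
    then show "work v l u T = 0"
      using work_eq_zero[OF v A done_early] by (auto simp: B_def not_le)
  qed
  also have "\<dots> < (\<Sum>l\<in>B. p l)"
  proof (rule sum_strict_mono_ex1[OF \<open>finite B\<close>])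
    show "\<forall>l\<in>B. work v l u T \<le> p l"
      using work_le_size[OF v] \<open>B \<subseteq> {..<n}\<close> by auto
    have "j \<in> B"
      using \<open>j \<in> A\<close> \<open>u \<le> r j\<close> by (simp add: B_def)
    then show "\<exists>l\<in>B. work v l u T < p l"
      using work_less_size[OF v A[OF \<open>j \<in> A\<close>] \<open>u \<le> r j\<close> released[OF \<open>j \<in> A\<close>] late]
      by blast
  qed
  also have "\<dots> = (\<Sum>l\<in>B. work w l u T)"
  proof (rule sum.cong[OF refl])
    fix l assume "l \<in> B"
    then show "p l = work w l u T"
      using work_eq_size[OF w A _ done_w] by (simp add: B_def)
  qed
  also have "\<dots> \<le> T - u"
    by (rule sum_work_le_length[OF w \<open>B \<subseteq> {..<n}\<close> \<open>u \<le> T\<close>])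
  finally show False by simp
qed

lemma Pri_runs_first_pending:
  assumes "is_Pri n r p S pri" "is_ordering n S"
    and "a < length S" "pending pri r p (S ! a) t"
    and first: "\<And>a'. a' < a \<Longrightarrow> \<not> pending pri r p (S ! a') t"
  shows "pri (S ! a) t = 1"
proof -
  have "S ! a < n"
    using assms(2,3) nth_mem by (fastforce simp: is_ordering_def)
  moreover have "b = a" if "b < length S" "S ! b = S ! a" for b
    using assms(2,3) that nth_eq_iff_index_eq by (auto simp: is_ordering_def)
  ultimately show ?thesis
    using assms(1,4) first by (auto simp: is_Pri_def)
qed

lemma Pri_conserving_on_prefix:
  assumes "is_Pri n r p S pri" "is_ordering n S"
    and "\<exists>j\<in>set (take m S). pending pri r p j t"
  shows "1 \<le> (\<Sum>j\<in>set (take m S). pri j t)"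
proof -
  have sched: "is_schedule n r p pri"
    using assms(1) by (simp add: is_Pri_def)
  obtain a where a: "a < m" "a < length S" "pending pri r p (S ! a) t"
    using assms(3) by (auto simp: in_set_conv_nth)
  define a0 where "a0 = (LEAST a. pending pri r p (S ! a) t)"
  have "a0 \<le> a" "pending pri r p (S ! a0) t"
    unfolding a0_def using a(3) by (auto intro: Least_le LeastI)
  then have "pri (S ! a0) t = 1"
    using a by (intro Pri_runs_first_pending[OF assms(1,2)]) (auto simp: a0_def dest: not_less_Least)
  moreover have "S ! a0 \<in> set (take m S)"
    using \<open>a0 \<le> a\<close> a by (auto simp: in_set_conv_nth intro!: exI[of _ a0])
  moreover have "set (take m S) \<subseteq> {..<n}"
    using assms(2) set_take_subset by (fastforce simp: is_ordering_def)
  ultimately have "pri (S ! a0) t \<le> (\<Sum>j\<in>set (take m S). pri j t)"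
    by (intro member_le_sum) (auto intro: schedule_nonneg[OF sched])
  with \<open>pri (S ! a0) t = 1\<close> show ?thesis
    by simp
qed

theorem mainTheorem1:
  fixes n :: nat and r p :: "nat \<Rightarrow> real" and S :: "nat list"
    and w pri :: "nat \<Rightarrow> real \<Rightarrow> real"
  assumes "\<forall>i<n. 0 \<le> r i" and "\<forall>i<n. 0 < p i"
    and "is_ordering n S"
    and "is_schedule n r p w" and "has_completion_sequence r p w S"
    and "is_Pri n r p S pri"
  shows "dominates n r p pri w"
  unfolding dominates_def
proof (intro allI impI)
  fix i assume "i < n"
  then obtain k where k: "k < length S" "S ! k = i"
    using assms(3) by (metis is_ordering_def in_set_conv_nth lessThan_iff)
  define A where "A = set (take (Suc k) S)"
  have "A \<subseteq> {..<n}"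
    using assms(3) set_take_subset by (fastforce simp: A_def is_ordering_def)
  moreover have "completion w r p l \<le> completion w r p i" if "l \<in> A" for l
    using that assms(5) k
    by (auto simp: A_def in_set_conv_nth has_completion_sequence_def less_Suc_eq)
  moreover have "i \<in> A"
    using k by (auto simp: A_def in_set_conv_nth intro!: exI[of _ k])
  moreover have "is_schedule n r p pri"
    using assms(6) by (simp add: is_Pri_def)
  ultimately show "completion pri r p i \<le> completion w r p i"
    using work_conserving_completes_no_later[OF assms(4)]
      Pri_conserving_on_prefix[OF assms(6,3), of "Suc k", folded A_def]
    by blast
qed

end
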